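(* Let $m\ge3$ and let $T\subset\mathcal M$ with $|T|=m-1$. Then $$R^{(\min)}_T\ \ge\ \frac1{m-2}\sum_{j\in T}H(X_{T\setminus\{j\}}|X_j).$$
   Context: Let $\mathcal M=\{1,\dots,m\}$, and let $X_{\mathcal M}$ be jointly distributed finite-valued random variables, with $X_A=(X_i:i\in A)$. For $T\subset\mathcal M$, let $$\mathcal R_T=\Big\{(R_i:i\in T):\ \sum_{i\in B\cap T}R_i\ge H(X_{B\cap T}|X_{B^c})\ \text{ for all } B\subsetneq\mathcal M \text{ with } B\cap T\neq\emptyset\Big\},$$ and let $R^{(\min)}_T=\min_{(R_i)\in\mathcal R_T}\sum_{i\in T}R_i$. *)

theory Defs
  imports "HOL-Probability.Probability"
begin

text \<open>The joint distribution of X_1,...,X_m is a pmf P on tuples x :: nat => 'a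
  (component i is the value of X_i); finite-valuedness = finite support.
  X_A is the restriction of the tuple to A.\<close>

definition cond_entropy :: "(nat \<Rightarrow> 'a) pmf \<Rightarrow> nat set \<Rightarrow> nat set \<Rightarrow> real" where
  "cond_entropy P A B =
     (let Q = map_pmf (\<lambda>x. (restrict x A, restrict x B)) P;
          QB = map_pmf snd Q
      in - (\<Sum>ab\<in>set_pmf Q. pmf Q ab * log 2 (pmf Q ab / pmf QB (snd ab))))"

definition rate_region :: "(nat \<Rightarrow> 'a) pmf \<Rightarrow> nat \<Rightarrow> nat set \<Rightarrow> (nat \<Rightarrow> real) set" where
  "rate_region P m T =
     {R. \<forall>B. B \<subset> {1..m} \<and> B \<inter> T \<noteq> {} \<longrightarrow>
            (\<Sum>i\<in>B \<inter> T. R i) \<ge> cond_entropy P (B \<inter> T) ({1..m} - B)}"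

definition R_min :: "(nat \<Rightarrow> 'a) pmf \<Rightarrow> nat \<Rightarrow> nat set \<Rightarrow> real" where
  "R_min P m T = Inf ((\<lambda>R. \<Sum>i\<in>T. R i) ` rate_region P m T)"

end

theory Submission
  imports Defs
begin

text \<open>For each j \<in> T, the cut B = {1..m} - {j} gives the constraint
  \<Sum>(T - {j}) R \<ge> H(X_(T-{j}) | X_j). Summing over the m - 1 choices of j counts every
  rate exactly m - 2 times. The infimum is over a nonempty set, since a large enough
  constant rate meets the finitely many constraints.\<close>

lemma rate_region_nonempty: "rate_region P m T \<noteq> {}"
proof -
  define C where "C = (\<Sum>B\<in>Pow {1..m}. \<bar>cond_entropy P (B \<inter> T) ({1..m} - B)\<bar>)"
  have "C \<ge> 0" unfolding C_def by (intro sum_nonneg) auto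
  have "(\<lambda>_. C) \<in> rate_region P m T"
    unfolding rate_region_def
  proof (intro CollectI allI impI)
    fix B assume B: "B \<subset> {1..m} \<and> B \<inter> T \<noteq> {}"
    have "cond_entropy P (B \<inter> T) ({1..m} - B) \<le> \<bar>cond_entropy P (B \<inter> T) ({1..m} - B)\<bar>"
      by simp
    also have "\<dots> \<le> C" unfolding C_def
      by (rule member_le_sum[where f="\<lambda>B. \<bar>cond_entropy P (B \<inter> T) ({1..m} - B)\<bar>"])
         (use B in auto)
    also have "\<dots> \<le> real (card (B \<inter> T)) * C"
    proof -
      have "finite (B \<inter> T)"
        using B by (meson finite_Int finite_atLeastAtMost finite_subset psubset_imp_subset)
      then have "card (B \<inter> T) \<ge> 1" using B by (simp add: Suc_le_eq card_gt_0_iff)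
      then show ?thesis using \<open>C \<ge> 0\<close> by (simp add: mult_le_cancel_right1)
    qed
    finally show "(\<Sum>i\<in>B \<inter> T. C) \<ge> cond_entropy P (B \<inter> T) ({1..m} - B)" by simp
  qed
  then show ?thesis by blast
qed

lemma rate_region_cond_entropy_le_sum_diff:
  assumes R: "R \<in> rate_region P m T" and T: "T \<subseteq> {1..m}"
    and j: "j \<in> T" and "T - {j} \<noteq> {}"
  shows "cond_entropy P (T - {j}) {j} \<le> (\<Sum>i\<in>T. R i) - R j"
proof -
  let ?B = "{1..m} - {j}"
  have cut_constraint: "cond_entropy P (B \<inter> T) ({1..m} - B) \<le> (\<Sum>i\<in>B \<inter> T. R i)"
    if "B \<subset> {1..m}" "B \<inter> T \<noteq> {}" for B
    using R that unfolding rate_region_def by blast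
  have "j \<in> {1..m}" using j T by auto
  then have "?B \<subset> {1..m}" and "{1..m} - ?B = {j}" by blast+
  moreover have "?B \<inter> T = T - {j}" using T by blast
  ultimately have "cond_entropy P (T - {j}) {j} \<le> (\<Sum>i\<in>T - {j}. R i)"
    using cut_constraint[of ?B] \<open>T - {j} \<noteq> {}\<close> by simp
  moreover have "finite T" using T finite_subset by blast
  ultimately show ?thesis using sum_diff1[of T R j] j by simp
qed

lemma rate_region_sum_cond_entropy_le:
  assumes R: "R \<in> rate_region P m T" and T: "T \<subseteq> {1..m}" and "card T \<ge> 2"
  shows "(\<Sum>j\<in>T. cond_entropy P (T - {j}) {j}) \<le> (real (card T) - 1) * (\<Sum>i\<in>T. R i)"
proof -
  have "finite T" using T finite_subset by blast
  have "T - {j} \<noteq> {}" if "j \<in> T" for j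
  proof -
    have "card (T - {j}) \<ge> 1" using that \<open>card T \<ge> 2\<close> \<open>finite T\<close> by simp
    then show ?thesis by (metis card.empty not_one_le_zero)
  qed
  then have "(\<Sum>j\<in>T. cond_entropy P (T - {j}) {j}) \<le> (\<Sum>j\<in>T. (\<Sum>i\<in>T. R i) - R j)"
    by (intro sum_mono rate_region_cond_entropy_le_sum_diff[OF R T])
  also have "\<dots> = (real (card T) - 1) * (\<Sum>i\<in>T. R i)"
    by (simp add: sum_subtractf algebra_simps)
  finally show ?thesis .
qed

theorem lemma7:
  fixes P :: "(nat \<Rightarrow> 'a) pmf" and m :: nat and T :: "nat set"
  assumes "finite (set_pmf P)"
    and "m \<ge> 3"
    and "T \<subseteq> {1..m}" and "card T = m - 1"
  shows "R_min P m T \<ge> (1 / (real m - 2)) * (\<Sum>j\<in>T. cond_entropy P (T - {j}) {j})"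
proof -
  have card: "real (card T) - 1 = real m - 2" "card T \<ge> 2"
    using assms(2,4) by (simp_all add: of_nat_diff)
  have "(1 / (real m - 2)) * (\<Sum>j\<in>T. cond_entropy P (T - {j}) {j}) \<le> (\<Sum>i\<in>T. R i)"
    if "R \<in> rate_region P m T" for R
    using rate_region_sum_cond_entropy_le[OF that assms(3) card(2)] card(1) assms(2)
    by (simp add: field_simps)
  then show ?thesis
    unfolding R_min_def using rate_region_nonempty by (intro cInf_greatest) auto
qed

end
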